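(* Let $\mathcal N_1$ and $\mathcal N_2$ be complex manifolds, with $\mathcal N_1$ weakly doubly-transitive, and let $\Phi:E(\mathcal N_1)\to E(\mathcal N_2)$ be an epimorphism of semigroups. Then there exists a bijective map $\Psi:\mathcal N_1\to\mathcal N_2$ such that $\Phi(f)=\Psi\circ f\circ\Psi^{-1}$ for all $f\in E(\mathcal N_1)$.
   Context: For a complex manifold $\mathcal N$, $E(\mathcal N)$ denotes the semigroup under composition of all holomorphic maps $\mathcal N\to\mathcal N$; an epimorphism is a surjective semigroup homomorphism (no continuity assumed, and $\Psi$ is not claimed continuous). $\mathcal N$ is weakly doubly-transitive if for every pair of distinct points $z_1,z_2\in\mathcal N$ and every $w_1\in\mathcal N$ there is a neighborhood $U$ of $w_1$ such that for every $w_2\in U$ there exists $f\in E(\mathcal N)$ with $f(z_1)=w_1$ and $f(z_2)=w_2$. *)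

theory Defs
  imports "HOL-Analysis.Analysis"
begin

definition cholo_on :: "(complex^'n \<Rightarrow> complex^'m) \<Rightarrow> (complex^'n) set \<Rightarrow> bool" where
  "cholo_on f S \<longleftrightarrow>
     (\<forall>x\<in>S. \<exists>L. (f has_derivative L) (at x) \<and> (\<forall>c v. L (c *s v) = c *s L v))"

definition complex_atlas :: "('a::topological_space set \<times> ('a \<Rightarrow> complex^'n)) set \<Rightarrow> bool" where
  "complex_atlas A \<longleftrightarrow>
     (\<forall>(U,\<phi>)\<in>A. open U \<and> open (\<phi> ` U) \<and> (\<exists>\<psi>. homeomorphism U (\<phi> ` U) \<phi> \<psi>)) \<and>
     (\<Union>(U,\<phi>)\<in>A. U) = UNIV \<and>
     (\<forall>(U,\<phi>)\<in>A. \<forall>(V,\<psi>)\<in>A. cholo_on (\<psi> \<circ> inv_into U \<phi>) (\<phi> ` (U \<inter> V)))"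

definition holo_map ::
  "('a::topological_space set \<times> ('a \<Rightarrow> complex^'n)) set \<Rightarrow>
   ('b::topological_space set \<times> ('b \<Rightarrow> complex^'m)) set \<Rightarrow> ('a \<Rightarrow> 'b) \<Rightarrow> bool" where
  "holo_map A B f \<longleftrightarrow> continuous_on UNIV f \<and>
     (\<forall>(U,\<phi>)\<in>A. \<forall>(V,\<psi>)\<in>B. cholo_on (\<psi> \<circ> f \<circ> inv_into U \<phi>) (\<phi> ` (U \<inter> f -` V)))"

definition End_hol :: "('a::topological_space set \<times> ('a \<Rightarrow> complex^'n)) set \<Rightarrow> ('a \<Rightarrow> 'a) set" where
  "End_hol A = {f. holo_map A A f}"

definition weakly_doubly_transitive ::
  "('a::topological_space set \<times> ('a \<Rightarrow> complex^'n)) set \<Rightarrow> bool" where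
  "weakly_doubly_transitive A \<longleftrightarrow>
     (\<forall>z1 z2 w1. z1 \<noteq> z2 \<longrightarrow>
        (\<exists>U. open U \<and> w1 \<in> U \<and>
           (\<forall>w2\<in>U. \<exists>f\<in>End_hol A. f z1 = w1 \<and> f z2 = w2)))"

definition semigroup_epi :: "('a \<Rightarrow> 'a) set \<Rightarrow> ('b \<Rightarrow> 'b) set \<Rightarrow> (('a \<Rightarrow> 'a) \<Rightarrow> ('b \<Rightarrow> 'b)) \<Rightarrow> bool" where
  "semigroup_epi E1 E2 \<Phi> \<longleftrightarrow> \<Phi> ` E1 = E2 \<and>
     (\<forall>f\<in>E1. \<forall>g\<in>E1. \<Phi> (f \<circ> g) = \<Phi> f \<circ> \<Phi> g)"

end

theory Submission
  imports Defs
begin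

text \<open>Constant maps are holomorphic, and in any semigroup of self-maps containing all of
  them they are exactly the left zeros (\<open>c \<circ> g = c\<close> for all \<open>g\<close>). A surjective homomorphism
  maps left zeros to left zeros, so \<open>\<Phi>\<close> sends the constant map with value \<open>a\<close> to a constant
  map with value \<open>\<Psi> a\<close>; composing with constants gives \<open>\<Phi> f \<circ> \<Psi> = \<Psi> \<circ> f\<close>, and surjectivity
  of \<open>\<Phi>\<close> makes \<open>\<Psi>\<close> surjective. If \<open>\<Psi> a = \<Psi> b\<close> for some \<open>a \<noteq> b\<close>, then \<open>\<Psi> (f a) = \<Psi> (f b)\<close>
  for every holomorphic \<open>f\<close>, and weak double transitivity makes \<open>\<Psi>\<close> locally constant. On a
  second countable space a locally constant map has countable range, whereas a complex
  manifold is uncountable; hence \<open>\<Psi>\<close> is injective.\<close>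

lemma constant_in_End_hol: "(\<lambda>_. c) \<in> End_hol A"
proof -
  have "cholo_on (\<lambda>_. d) S" for d :: "complex^'m" and S :: "(complex^'n) set"
    unfolding cholo_on_def by (intro ballI exI[of _ "\<lambda>_. 0"]) auto
  then show ?thesis
    unfolding End_hol_def holo_map_def by (auto simp: o_def)
qed

lemma complex_atlas_uncountable_UNIV:
  fixes A :: "('a::topological_space set \<times> ('a \<Rightarrow> complex^'n)) set"
  assumes "complex_atlas A"
  shows "uncountable (UNIV :: 'a set)"
proof -
  obtain U \<phi> x where "(U, \<phi>) \<in> A" "x \<in> U"
    using assms unfolding complex_atlas_def by blast
  then have "open (\<phi> ` U)" "\<phi> x \<in> \<phi> ` U"
    using assms unfolding complex_atlas_def by auto
  then obtain r where "r > 0" "ball (\<phi> x) r \<subseteq> \<phi> ` U"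
    by (meson open_contains_ball)
  then have "uncountable (\<phi> ` U)"
    using uncountable_ball countable_subset by metis
  then show ?thesis
    by (metis countable_image countable_subset subset_UNIV)
qed

lemma countable_range_locally_constant:
  fixes g :: "'a::second_countable_topology \<Rightarrow> 'b"
  assumes "\<And>x. \<exists>U. open U \<and> x \<in> U \<and> (\<forall>y\<in>U. g y = g x)"
  shows "countable (range g)"
proof -
  have "open (g -` {c})" for c
  proof (rule topological_space_class.openI)
    fix x assume x: "x \<in> g -` {c}"
    obtain U where "open U" "x \<in> U" "\<forall>y\<in>U. g y = g x"
      using assms by blast
    with x show "\<exists>T. open T \<and> x \<in> T \<and> T \<subseteq> g -` {c}"
      by blast
  qed
  then have "countable ((\<lambda>c. g -` {c}) ` range g)"
    by (intro countable_disjoint_open_subsets) (auto simp: pairwise_def disjnt_iff)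
  moreover have "inj_on (\<lambda>c. g -` {c}) (range g)"
    by (auto intro!: inj_onI)
  ultimately show ?thesis
    by (rule countable_image_inj_on)
qed

locale semigroup_epi_with_constants =
  fixes E1 :: "('a \<Rightarrow> 'a) set" and E2 :: "('b \<Rightarrow> 'b) set" and \<Phi> :: "('a \<Rightarrow> 'a) \<Rightarrow> ('b \<Rightarrow> 'b)"
  assumes epi: "semigroup_epi E1 E2 \<Phi>"
    and constant_in_E1: "(\<lambda>_. a) \<in> E1"
    and constant_in_E2: "(\<lambda>_. b) \<in> E2"
begin

lemma image_eq: "\<Phi> ` E1 = E2"
  using epi unfolding semigroup_epi_def by blast

lemma hom: "f \<in> E1 \<Longrightarrow> g \<in> E1 \<Longrightarrow> \<Phi> (f \<circ> g) = \<Phi> f \<circ> \<Phi> g"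
  using epi unfolding semigroup_epi_def by blast

definition point_map :: "'a \<Rightarrow> 'b" where
  "point_map a = \<Phi> (\<lambda>_. a) undefined"

lemma Phi_constant: "\<Phi> (\<lambda>_. a) = (\<lambda>_. point_map a)"
proof -
  have left_zero: "\<Phi> (\<lambda>_. a) \<circ> g = \<Phi> (\<lambda>_. a)" if g: "g \<in> E2" for g
  proof -
    obtain f where f: "f \<in> E1" "g = \<Phi> f"
      using g image_eq by blast
    have "\<Phi> (\<lambda>_. a) \<circ> g = \<Phi> ((\<lambda>_. a) \<circ> f)"
      using hom[OF constant_in_E1 f(1)] f(2) by simp
    also have "\<dots> = \<Phi> (\<lambda>_. a)"
      by (simp add: o_def)
    finally show ?thesis .
  qed
  show ?thesis
  proof
    fix y
    show "\<Phi> (\<lambda>_. a) y = point_map a"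
      using fun_cong[OF left_zero[OF constant_in_E2], of y]
      unfolding point_map_def by simp
  qed
qed

lemma Phi_point_map: "f \<in> E1 \<Longrightarrow> \<Phi> f (point_map x) = point_map (f x)"
  using fun_cong[OF hom[OF _ constant_in_E1, of f x], of undefined]
  by (simp add: Phi_constant o_def)

lemma surj_point_map: "surj point_map"
proof -
  have "y \<in> range point_map" for y
  proof -
    obtain g where g: "g \<in> E1" "\<Phi> g = (\<lambda>_. y)"
      using constant_in_E2 image_eq by (metis imageE)
    have "point_map (g undefined) = y"
      using Phi_point_map[OF g(1), of undefined] g(2) by simp
    then show ?thesis
      by blast
  qed
  then show ?thesis
    by blast
qed

lemma point_map_eq_compose:
  assumes "point_map a = point_map b" and "f \<in> E1"
  shows "point_map (f a) = point_map (f b)"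
  using Phi_point_map[OF assms(2), of a] Phi_point_map[OF assms(2), of b] assms(1) by simp

lemma Phi_eq_conjugate:
  assumes "f \<in> E1"
  shows "\<Phi> f = point_map \<circ> f \<circ> inv point_map"
proof
  fix y
  have "\<Phi> f y = \<Phi> f (point_map (inv point_map y))"
    using surj_point_map by (simp add: surj_f_inv_f)
  then show "\<Phi> f y = (point_map \<circ> f \<circ> inv point_map) y"
    using Phi_point_map[OF assms] by simp
qed

end

lemma weakly_doubly_transitive_locally_constant:
  assumes "weakly_doubly_transitive A" and "a \<noteq> b"
    and "\<And>f. f \<in> End_hol A \<Longrightarrow> g (f a) = g (f b)"
  shows "\<exists>U. open U \<and> w \<in> U \<and> (\<forall>y\<in>U. g y = g w)"
proof -
  obtain U where "open U" "w \<in> U" and reach: "\<forall>y\<in>U. \<exists>f\<in>End_hol A. f a = w \<and> f b = y"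
    using assms(1,2) unfolding weakly_doubly_transitive_def by blast
  have "g y = g w" if y: "y \<in> U" for y
  proof -
    obtain f where "f \<in> End_hol A" "f a = w" "f b = y"
      using reach y by blast
    then show ?thesis
      using assms(3) by metis
  qed
  with \<open>open U\<close> \<open>w \<in> U\<close> show ?thesis by blast
qed

theorem lemma2:
  fixes A1 :: "('a::{t2_space,second_countable_topology} set \<times> ('a \<Rightarrow> complex^'n)) set"
    and A2 :: "('b::{t2_space,second_countable_topology} set \<times> ('b \<Rightarrow> complex^'m)) set"
    and \<Phi> :: "('a \<Rightarrow> 'a) \<Rightarrow> ('b \<Rightarrow> 'b)"
  assumes "complex_atlas A1" and "complex_atlas A2"
    and "weakly_doubly_transitive A1"
    and "semigroup_epi (End_hol A1) (End_hol A2) \<Phi>"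
  shows "\<exists>\<Psi> :: 'a \<Rightarrow> 'b. bij \<Psi> \<and> (\<forall>f\<in>End_hol A1. \<Phi> f = \<Psi> \<circ> f \<circ> inv \<Psi>)"
proof -
  interpret semigroup_epi_with_constants "End_hol A1" "End_hol A2" \<Phi>
    by unfold_locales (simp_all add: assms(4) constant_in_End_hol)
  have "inj point_map"
  proof (rule injI, rule ccontr)
    fix a b assume "point_map a = point_map b" "a \<noteq> b"
    then have "countable (range point_map)"
      using assms(3) point_map_eq_compose
      by (intro countable_range_locally_constant weakly_doubly_transitive_locally_constant)
    then show False
      using surj_point_map complex_atlas_uncountable_UNIV[OF assms(2)] by simp
  qed
  then show ?thesis
    using surj_point_map Phi_eq_conjugate by (blast intro: bijI)
qed

end
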